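(* Let $D\ge 1$, $\mu>1$ and $\theta>0$. Let $(V,T)$ be a Galton–Watson tree of depth $D$ (truncated at generation $D$) with root $v_o$ and offspring distribution of mean $\mu$, and let $V_d$ be the set of nodes at depth $d$. Set \[ \rho_d:=\frac{\theta(\mu-1)}{(\theta-1)(\mu-1)+\mu^d-1},\quad d=1,\dots,D-1,\qquad \rho_D:=0. \] Conditionally on the tree, let $\{Z_v, v\in V\setminus\{v_o\}\}$ be independent Bernoulli variables with $\mathbf{E}[Z_v]=\rho_d$ for $v\in V_d$, and assign labels as follows: the root gets label $0$; in order of increasing depth, a node with $Z_v=0$ takes its parent's label, and a node with $Z_v=1$ takes a new label not used before. Then the expected number of distinct labels among all vertices of the tree is \[ K(\mu,D,\theta)=1+\theta(\mu-1)\sum_{d=1}^{D-1}\frac{1}{1+(\theta\mu-\theta-\mu)\mu^{-d}}. \]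
   Context: The number of distinct labels equals $1+\sum_{v\ne v_o}Z_v$. For $\theta>0$, $\mu>1$ the numbers $\rho_d$ lie in $(0,1]$ with $\rho_1=1$. *)

theory Defs
  imports "HOL-Probability.Probability"
begin

text \<open>Ulam--Harris encoding of a Galton--Watson tree. A potential node is a list of
  child indices, written with the LAST step first: (i # u) is the i-th child of u. Each potential node u carries an offspring count
  xi u (iid with law p) and a Bernoulli mark Z u.\<close>

fun in_tree :: "(nat list \<Rightarrow> nat) \<Rightarrow> nat list \<Rightarrow> bool" where
  "in_tree xi [] = True"
| "in_tree xi (i # u) = (in_tree xi u \<and> i < xi u)"

definition tree_nodes :: "(nat list \<Rightarrow> nat) \<Rightarrow> nat \<Rightarrow> nat list set" where
  "tree_nodes xi D = {v. in_tree xi v \<and> length v \<le> D}"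

text \<open>Label of a node: the root gets label [] (``label 0''); a node with Z = 1 gets a fresh
  label (its own name, never used before); a node with Z = 0 inherits its parent's label.\<close>
fun lab :: "(nat list \<Rightarrow> bool) \<Rightarrow> nat list \<Rightarrow> nat list" where
  "lab Z [] = []"
| "lab Z (i # u) = (if Z (i # u) then i # u else lab Z u)"

definition rho :: "real \<Rightarrow> real \<Rightarrow> nat \<Rightarrow> nat \<Rightarrow> real" where
  "rho \<mu> \<theta> D d =
     (if 1 \<le> d \<and> d < D then \<theta> * (\<mu> - 1) / ((\<theta> - 1) * (\<mu> - 1) + \<mu> ^ d - 1) else 0)"

text \<open>Joint law: offspring counts and marks, all independent; the mark at depth d is
  Bernoulli(rho_d). (Marks independent of the tree, hence conditionally independent
  given the tree with the prescribed means.)\<close>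
definition GW_space :: "nat pmf \<Rightarrow> real \<Rightarrow> real \<Rightarrow> nat \<Rightarrow> (nat list \<Rightarrow> nat \<times> bool) measure" where
  "GW_space p \<mu> \<theta> D =
     (\<Pi>\<^sub>M u\<in>UNIV. measure_pmf (pair_pmf p (bernoulli_pmf (rho \<mu> \<theta> D (length u)))))"

definition num_labels :: "nat \<Rightarrow> (nat list \<Rightarrow> nat \<times> bool) \<Rightarrow> nat" where
  "num_labels D \<omega> = card (lab (snd \<circ> \<omega>) ` tree_nodes (fst \<circ> \<omega>) D)"

definition K :: "real \<Rightarrow> nat \<Rightarrow> real \<Rightarrow> real" where
  "K \<mu> D \<theta> = 1 + \<theta> * (\<mu> - 1) *
      (\<Sum>d = 1..D - 1. 1 / (1 + (\<theta> * \<mu> - \<theta> - \<mu>) * inverse (\<mu> ^ d)))"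

end

theory Submission
  imports Defs
begin

text \<open>The labels in use are exactly the root and the tree nodes v with Z v, since that is
  where a label is created. So the expected number of labels is the sum, over all potential
  nodes v of depth d \<le> D, of the probability that v is in the tree and marked. This event
  only involves the coordinates on the path from the root to v, so in the product space its
  probability is rho_d (read as 1 for the root) times the product of the tail probabilities
  P(xi > i) over the child indices i along v. Summing over all index words of length d
  gives rho_d mu^d, because the tail probabilities sum to the mean mu, and
  1 plus the sum of rho_d mu^d over 1 \<le> d < D equals K by algebra.\<close>

lemma in_tree_iff_nth: "in_tree xi v \<longleftrightarrow> (\<forall>k<length v. v ! k < xi (drop (Suc k) v))"
  by (induction v) (auto simp: All_less_Suc2)

lemma in_tree_drop: "in_tree xi v \<Longrightarrow> in_tree xi (drop k v)"
  by (induction v arbitrary: k) (auto simp: drop_Cons split: nat.splits)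

lemma lab_eq_drop: "\<exists>k. lab Z v = drop k v \<and> (lab Z v = [] \<or> Z (lab Z v))"
proof (induction v)
  case (Cons i u)
  then obtain k where "lab Z u = drop k u \<and> (lab Z u = [] \<or> Z (lab Z u))" by blast
  then show ?case
    by (cases "Z (i # u)") (auto intro: exI[of _ 0] exI[of _ "Suc k"])
qed simp

lemma lab_image_tree_nodes:
  "lab Z ` tree_nodes xi D = {v \<in> tree_nodes xi D. v = [] \<or> Z v}"
proof (intro equalityI subsetI)
  fix w assume "w \<in> lab Z ` tree_nodes xi D"
  then obtain v where v: "v \<in> tree_nodes xi D" and w: "w = lab Z v" by blast
  obtain k where "w = drop k v" and "w = [] \<or> Z w" using lab_eq_drop w by blast
  with v in_tree_drop show "w \<in> {v \<in> tree_nodes xi D. v = [] \<or> Z v}"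
    by (auto simp: tree_nodes_def)
next
  fix w assume w: "w \<in> {v \<in> tree_nodes xi D. v = [] \<or> Z v}"
  then have "lab Z w = w" by (cases w) auto
  with w show "w \<in> lab Z ` tree_nodes xi D" by (auto intro: image_eqI[of _ _ w])
qed

lemma finite_tree_nodes: "finite (tree_nodes xi D)"
proof (induction D)
  case 0
  have "tree_nodes xi 0 = {[]}" by (auto simp: tree_nodes_def)
  then show ?case by simp
next
  case (Suc D)
  have "tree_nodes xi (Suc D) \<subseteq>
      tree_nodes xi D \<union> (\<lambda>(u, i). i # u) ` (SIGMA u:tree_nodes xi D. {..<xi u})"
  proof
    fix v assume "v \<in> tree_nodes xi (Suc D)"
    then show "v \<in> tree_nodes xi D \<union> (\<lambda>(u, i). i # u) ` (SIGMA u:tree_nodes xi D. {..<xi u})"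
      by (cases v) (auto simp: tree_nodes_def intro!: image_eqI[of _ _ "(tl v, hd v)"])
  qed
  then show ?case using Suc finite_subset by blast
qed

definition root_path :: "'a list \<Rightarrow> 'a list set" where
  "root_path v = (\<lambda>k. drop k v) ` {..length v}"

definition fresh_label_event :: "nat list \<Rightarrow> (nat list \<Rightarrow> nat \<times> bool) set" where
  "fresh_label_event v = {\<omega>. in_tree (fst \<circ> \<omega>) v \<and> (v = [] \<or> snd (\<omega> v))}"

text \<open>On a strict ancestor u of v, v ! (length v - length u - 1) is the index of the
  child of u lying on the path to v.\<close>
definition fresh_label_box :: "nat list \<Rightarrow> nat list \<Rightarrow> (nat \<times> bool) set" where
  "fresh_label_box v u =
     (if u = v then (if v = [] then UNIV else UNIV \<times> {True})
      else {v ! (length v - length u - 1)<..} \<times> UNIV)"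

lemma finite_root_path: "finite (root_path v)"
  by (simp add: root_path_def)

lemma inj_on_drop: "inj_on (\<lambda>k. drop k v) {..length v}"
  by (rule inj_onI) (metis atMost_iff diff_diff_cancel length_drop)

lemma fresh_label_box_ancestor:
  "k < length v \<Longrightarrow> fresh_label_box v (drop (Suc k) v) = {v ! k<..} \<times> UNIV"
  by (auto simp: fresh_label_box_def dest: arg_cong[of _ _ length])

lemma fresh_label_event_eq_prod_emb:
  assumes "\<And>u. space (M u) = UNIV"
  shows "fresh_label_event v =
    prod_emb UNIV M (root_path v) (\<Pi>\<^sub>E u\<in>root_path v. fresh_label_box v u)"
    (is "_ = ?E")
proof (intro set_eqI)
  fix \<omega>
  have "\<omega> \<in> fresh_label_event v \<longleftrightarrow>
      \<omega> v \<in> fresh_label_box v v \<and> (\<forall>k<length v. \<omega> (drop (Suc k) v) \<in> {v ! k<..} \<times> UNIV)"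
    by (auto simp: fresh_label_event_def in_tree_iff_nth fresh_label_box_def mem_Times_iff)
  also have "\<dots> \<longleftrightarrow> (\<forall>k<Suc (length v). \<omega> (drop k v) \<in> fresh_label_box v (drop k v))"
    by (simp add: All_less_Suc2 fresh_label_box_ancestor)
  also have "\<dots> \<longleftrightarrow> \<omega> \<in> ?E"
    using assms by (auto simp: prod_emb_iff root_path_def less_Suc_eq_le)
  finally show "\<omega> \<in> fresh_label_event v \<longleftrightarrow> \<omega> \<in> ?E" .
qed

lemma fresh_label_event_in_sets:
  "fresh_label_event v \<in> sets (\<Pi>\<^sub>M u\<in>UNIV. measure_pmf (N u))"
  unfolding fresh_label_event_eq_prod_emb[of "\<lambda>u. measure_pmf (N u)", OF space_measure_pmf]
  by (rule sets_PiM_I) (auto simp: finite_root_path)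

lemma emeasure_pair_pmf_Times:
  "emeasure (measure_pmf (pair_pmf p r)) (A \<times> B) = emeasure p A * emeasure r B"
proof -
  have "emeasure (measure_pmf (pair_pmf p r)) (A \<times> B)
      = (\<integral>\<^sup>+a. \<integral>\<^sup>+b. indicator A a * indicator B b \<partial>r \<partial>p)"
    by (simp flip: nn_integral_indicator add: nn_integral_pair_pmf' indicator_times)
  also have "\<dots> = emeasure p A * emeasure r B"
    by (simp add: nn_integral_cmult nn_integral_multc)
  finally show ?thesis .
qed

lemma prod_list_map_conv_prod_nth: "prod_list (map f xs) = (\<Prod>k<length xs. f (xs ! k))"
  by (induction xs) (simp_all add: prod.lessThan_Suc_shift del: prod.lessThan_Suc)

lemma emeasure_fresh_label_event:
  fixes p :: "nat pmf" and q :: "nat \<Rightarrow> real"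
  assumes "\<And>d. 0 \<le> q d" and "\<And>d. q d \<le> 1"
  shows "emeasure (\<Pi>\<^sub>M u\<in>UNIV. measure_pmf (pair_pmf p (bernoulli_pmf (q (length u)))))
           (fresh_label_event v)
       = ennreal (if v = [] then 1 else q (length v)) * (\<Prod>i\<leftarrow>v. emeasure p {i<..})"
proof -
  define M :: "nat list \<Rightarrow> (nat \<times> bool) measure"
    where "M u = measure_pmf (pair_pmf p (bernoulli_pmf (q (length u))))" for u
  have space_M: "space (M u) = UNIV" for u
    by (simp add: M_def)
  have "emeasure (\<Pi>\<^sub>M u\<in>UNIV. M u) (fresh_label_event v)
      = (\<Prod>u\<in>root_path v. emeasure (M u) (fresh_label_box v u))"
    unfolding fresh_label_event_eq_prod_emb[of M, OF space_M]
    by (rule emeasure_PiM_emb) (auto simp: M_def finite_root_path prob_space_measure_pmf)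
  also have "\<dots> = (\<Prod>k<Suc (length v). emeasure (M (drop k v)) (fresh_label_box v (drop k v)))"
    by (simp add: root_path_def prod.reindex[OF inj_on_drop] lessThan_Suc_atMost)
  also have "\<dots> = emeasure (M v) (fresh_label_box v v)
      * (\<Prod>k<length v. emeasure p {v ! k<..})"
    by (simp add: prod.lessThan_Suc_shift fresh_label_box_ancestor M_def emeasure_pair_pmf_Times
             del: prod.lessThan_Suc)
  also have "emeasure (M v) (fresh_label_box v v) = ennreal (if v = [] then 1 else q (length v))"
    using assms by (auto simp: M_def fresh_label_box_def emeasure_pair_pmf_Times emeasure_pmf_single)
  finally show ?thesis
    by (simp add: M_def prod_list_map_conv_prod_nth)
qed

lemma nn_integral_lists_of_length_prod_list:
  fixes f :: "'a::countable \<Rightarrow> ennreal"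
  shows "(\<integral>\<^sup>+v. (\<Prod>i\<leftarrow>v. f i) \<partial>count_space {v. length v = n}) = (\<integral>\<^sup>+i. f i \<partial>count_space UNIV) ^ n"
proof (induction n)
  case 0
  then show ?case by (simp add: nn_integral_count_space_finite)
next
  case (Suc n)
  let ?L = "{v :: 'a list. length v = n}"
  have "bij_betw (\<lambda>(i, u). i # u) (UNIV \<times> ?L) {v. length v = Suc n}"
    by (rule bij_betwI[where g = "\<lambda>v. (hd v, tl v)"]) (auto simp: length_Suc_conv)
  then have "(\<integral>\<^sup>+v. (\<Prod>i\<leftarrow>v. f i) \<partial>count_space {v. length v = Suc n})
      = (\<integral>\<^sup>+x. (\<Prod>i\<leftarrow>fst x # snd x. f i) \<partial>count_space (UNIV \<times> ?L))"
    by (subst nn_integral_bij_count_space[symmetric]) (auto simp: case_prod_beta)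
  also have "\<dots> = (\<integral>\<^sup>+x. f (fst x) * (\<Prod>i\<leftarrow>snd x. f i) \<partial>(count_space UNIV \<Otimes>\<^sub>M count_space ?L))"
    by (simp add: pair_measure_countable)
  also have "\<dots> = (\<integral>\<^sup>+a. \<integral>\<^sup>+u. f a * (\<Prod>i\<leftarrow>u. f i) \<partial>count_space ?L \<partial>count_space UNIV)"
    by (subst sigma_finite_measure.nn_integral_fst[symmetric])
       (auto simp: sigma_finite_measure_count_space_countable pair_measure_countable)
  also have "\<dots> = (\<integral>\<^sup>+i. f i \<partial>count_space UNIV) * (\<integral>\<^sup>+i. f i \<partial>count_space UNIV) ^ n"
    by (simp add: nn_integral_cmult nn_integral_multc Suc.IH)
  finally show ?case by simp
qed

lemma nn_integral_tail_probabilities: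
  fixes p :: "nat pmf"
  shows "(\<integral>\<^sup>+i. emeasure p {i<..} \<partial>count_space UNIV) = (\<integral>\<^sup>+k. real k \<partial>p)"
proof -
  have "(\<integral>\<^sup>+i. emeasure p {i<..} \<partial>count_space UNIV)
      = (\<integral>\<^sup>+i. \<integral>\<^sup>+k. indicator {..<k} i \<partial>p \<partial>count_space UNIV)"
    by (intro nn_integral_cong)
       (auto simp flip: nn_integral_indicator intro!: nn_integral_cong split: split_indicator)
  also have "\<dots> = (\<integral>\<^sup>+k. \<integral>\<^sup>+i. indicator {..<k} i \<partial>count_space UNIV \<partial>p)"
    by (rule nn_integral_count_space_nn_integral[symmetric]) auto
  also have "\<dots> = (\<integral>\<^sup>+k. real k \<partial>p)"
    by (simp add: ennreal_of_nat_eq_real_of_nat)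
  finally show ?thesis .
qed

lemma nn_integral_count_space_UN_disjoint:
  assumes "finite I" and "disjoint_family_on A I"
  shows "(\<integral>\<^sup>+x. f x \<partial>count_space (\<Union>i\<in>I. A i)) = (\<Sum>i\<in>I. \<integral>\<^sup>+x. f x \<partial>count_space (A i))"
  by (simp add: nn_integral_count_space_indicator indicator_UN_disjoint[OF assms]
                sum_distrib_left nn_integral_sum)

lemma num_labels_eq_nn_integral:
  "ennreal (real (num_labels D \<omega>))
     = (\<integral>\<^sup>+v. indicator (fresh_label_event v) \<omega> \<partial>count_space {v. length v \<le> D})"
proof -
  define S where "S = {v. length v \<le> D \<and> \<omega> \<in> fresh_label_event v}"
  have "lab (snd \<circ> \<omega>) ` tree_nodes (fst \<circ> \<omega>) D = S"
    unfolding lab_image_tree_nodes by (auto simp: tree_nodes_def fresh_label_event_def S_def)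
  moreover have "finite S"
    by (rule finite_subset[OF _ finite_tree_nodes[of "fst \<circ> \<omega>" D]])
       (auto simp: S_def tree_nodes_def fresh_label_event_def)
  moreover have "(\<integral>\<^sup>+v. indicator (fresh_label_event v) \<omega> \<partial>count_space {v. length v \<le> D})
      = emeasure (count_space {v. length v \<le> D}) S"
    by (subst nn_integral_indicator[symmetric])
       (auto simp: S_def intro!: nn_integral_cong split: split_indicator)
  moreover have "S \<subseteq> {v. length v \<le> D}" by (auto simp: S_def)
  ultimately show ?thesis
    by (simp add: num_labels_def ennreal_of_nat_eq_real_of_nat)
qed

lemma expected_num_labels:
  fixes p :: "nat pmf" and q :: "nat \<Rightarrow> real"
  assumes "\<And>d. 0 \<le> q d" and "\<And>d. q d \<le> 1"
  shows "(\<integral>\<^sup>+\<omega>. real (num_labels D \<omega>)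
            \<partial>(\<Pi>\<^sub>M u\<in>UNIV. measure_pmf (pair_pmf p (bernoulli_pmf (q (length u))))))
       = (\<Sum>d\<le>D. ennreal (if d = 0 then 1 else q d) * (\<integral>\<^sup>+k. real k \<partial>p) ^ d)"
proof -
  let ?\<Omega> = "\<Pi>\<^sub>M u\<in>UNIV. measure_pmf (pair_pmf p (bernoulli_pmf (q (length u))))"
  let ?w = "\<lambda>d. ennreal (if d = 0 then 1 else q d)"
  let ?tail = "\<lambda>i. emeasure p {i<..}"
  have levels: "{v :: nat list. length v \<le> D} = (\<Union>d\<le>D. {v. length v = d})" by auto
  have "(\<integral>\<^sup>+\<omega>. real (num_labels D \<omega>) \<partial>?\<Omega>)
      = (\<integral>\<^sup>+v. emeasure ?\<Omega> (fresh_label_event v) \<partial>count_space {v. length v \<le> D})"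
    unfolding num_labels_eq_nn_integral
    by (subst nn_integral_count_space_nn_integral)
       (simp_all add: fresh_label_event_in_sets borel_measurable_indicator)
  also have "\<dots> = (\<Sum>d\<le>D. \<integral>\<^sup>+v. emeasure ?\<Omega> (fresh_label_event v) \<partial>count_space {v. length v = d})"
    unfolding levels
    by (rule nn_integral_count_space_UN_disjoint) (auto simp: disjoint_family_on_def)
  also have "\<dots> = (\<Sum>d\<le>D. ?w d * (\<integral>\<^sup>+i. ?tail i \<partial>count_space UNIV) ^ d)"
  proof (rule sum.cong[OF refl])
    fix d
    have "(\<integral>\<^sup>+v. emeasure ?\<Omega> (fresh_label_event v) \<partial>count_space {v. length v = d})
        = (\<integral>\<^sup>+v. ?w d * (\<Prod>i\<leftarrow>v. ?tail i) \<partial>count_space {v. length v = d})"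
      by (intro nn_integral_cong) (auto simp: emeasure_fresh_label_event[where q = q, OF assms])
    then show "(\<integral>\<^sup>+v. emeasure ?\<Omega> (fresh_label_event v) \<partial>count_space {v. length v = d})
        = ?w d * (\<integral>\<^sup>+i. ?tail i \<partial>count_space UNIV) ^ d"
      by (simp add: nn_integral_cmult nn_integral_lists_of_length_prod_list)
  qed
  finally show ?thesis by (simp add: nn_integral_tail_probabilities)
qed

lemma rho_denominator_ge:
  fixes \<mu> \<theta> :: real
  assumes "1 \<le> d" and "1 \<le> \<mu>"
  shows "\<theta> * (\<mu> - 1) \<le> (\<theta> - 1) * (\<mu> - 1) + \<mu> ^ d - 1"
proof -
  have "\<mu> ^ 1 \<le> \<mu> ^ d" using assms by (intro power_increasing)
  then show ?thesis by (simp add: algebra_simps)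
qed

lemma rho_nonneg_le_one:
  assumes "1 < \<mu>" and "0 < \<theta>"
  shows "0 \<le> rho \<mu> \<theta> D d" and "rho \<mu> \<theta> D d \<le> 1"
proof -
  have bounds: "0 \<le> a / b \<and> a / b \<le> 1" if "0 < a" and "a \<le> b" for a b :: real
    using that by (simp add: divide_le_eq_1)
  have "0 \<le> rho \<mu> \<theta> D d \<and> rho \<mu> \<theta> D d \<le> 1"
    using assms bounds[OF _ rho_denominator_ge[of d \<mu> \<theta>]] by (simp add: rho_def)
  then show "0 \<le> rho \<mu> \<theta> D d" and "rho \<mu> \<theta> D d \<le> 1" by simp_all
qed

lemma rho_mult_power:
  assumes "1 \<le> d" and "d < D" and "1 < \<mu>" and "0 < \<theta>"
  shows "rho \<mu> \<theta> D d * \<mu> ^ d = \<theta> * (\<mu> - 1) * (1 / (1 + (\<theta> * \<mu> - \<theta> - \<mu>) * inverse (\<mu> ^ d)))"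
proof -
  have "0 < \<theta> * (\<mu> - 1)" using assms by simp
  also have "\<dots> \<le> (\<theta> - 1) * (\<mu> - 1) + \<mu> ^ d - 1"
    using assms by (intro rho_denominator_ge) auto
  finally have "(\<theta> - 1) * (\<mu> - 1) + \<mu> ^ d - 1 \<noteq> 0" by simp
  moreover have "\<mu> ^ d \<noteq> 0" using assms by simp
  ultimately show ?thesis
    using assms by (simp add: rho_def field_simps)
qed

lemma sum_rho_mult_power_eq_K:
  assumes "1 \<le> D" and "1 < \<mu>" and "0 < \<theta>"
  shows "(\<Sum>d\<le>D. (if d = 0 then 1 else rho \<mu> \<theta> D d) * \<mu> ^ d) = K \<mu> D \<theta>"
proof -
  obtain D' where D: "D = Suc D'" using assms(1) by (cases D) auto
  let ?f = "\<lambda>d. (if d = 0 then 1 else rho \<mu> \<theta> D d) * \<mu> ^ d"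
  have "(\<Sum>d\<le>D. ?f d) = 1 + (\<Sum>d\<le>D'. ?f (Suc d))"
    unfolding D by (subst sum.atMost_Suc_shift) simp
  also have "(\<Sum>d\<le>D'. ?f (Suc d)) = (\<Sum>d<D'. rho \<mu> \<theta> D (Suc d) * \<mu> ^ Suc d)"
    by (simp add: lessThan_Suc_atMost[symmetric] D rho_def del: power_Suc)
  also have "\<dots> = (\<Sum>d<D'. \<theta> * (\<mu> - 1) * (1 / (1 + (\<theta> * \<mu> - \<theta> - \<mu>) * inverse (\<mu> ^ Suc d))))"
    using assms D by (intro sum.cong refl rho_mult_power) auto
  also have "1 + \<dots> = K \<mu> D \<theta>"
    by (simp add: K_def D sum_distrib_left sum.atLeast1_atMost_eq del: power_Suc)
  finally show ?thesis .
qed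

theorem lemma8p1:
  fixes p :: "nat pmf" and \<mu> \<theta> :: real and D :: nat
  assumes "D \<ge> 1" and "\<mu> > 1" and "\<theta> > 0"
    and "(\<integral>\<^sup>+ k. ennreal (real k) \<partial>measure_pmf p) = ennreal \<mu>"
  shows "(\<integral>\<^sup>+ \<omega>. ennreal (real (num_labels D \<omega>)) \<partial>GW_space p \<mu> \<theta> D) = ennreal (K \<mu> D \<theta>)"
proof -
  let ?w = "\<lambda>d. if d = 0 then 1 else rho \<mu> \<theta> D d"
  have w_nonneg: "0 \<le> ?w d" for d using rho_nonneg_le_one(1)[OF assms(2,3)] by simp
  have "(\<integral>\<^sup>+ \<omega>. ennreal (real (num_labels D \<omega>)) \<partial>GW_space p \<mu> \<theta> D)
      = (\<Sum>d\<le>D. ennreal (?w d) * ennreal \<mu> ^ d)"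
    unfolding GW_space_def assms(4)[symmetric]
    by (intro expected_num_labels rho_nonneg_le_one assms(2,3))
  also have "\<dots> = ennreal (\<Sum>d\<le>D. ?w d * \<mu> ^ d)"
    using assms(2) w_nonneg by (simp add: ennreal_power ennreal_mult'[symmetric] sum_ennreal)
  also have "\<dots> = ennreal (K \<mu> D \<theta>)"
    using sum_rho_mult_power_eq_K[OF assms(1,2,3)] by simp
  finally show ?thesis .
qed

end
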